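(* Let $q\ge2$, $z\in\{1,\dots,q-1\}$, $\varepsilon>0$ sufficiently small (depending on $q$), $n$ a positive integer, $v$ a string over $\{1,\dots,q\}$, and $r_1>r_2>\dots>r_k$ positive integers with $r_j\ge r_{j+1}/\varepsilon^4$, such that $l_j=\varepsilon^2 r_j$ are integers, $l_1\mid|v|$, $l_{j+1}\mid l_j$, and $\mathrm{adv}^{q,z}(v,A^q_{r_j,n})\ge\varepsilon/q$ for all $j$. Let $v_0=v$ and for $j=1,\dots,k$ let $v_j$ be chosen uniformly at random among the consecutive non-overlapping length-$l_j$ substrings into which $v_{j-1}$ is split. Let $F^p_j=\mathrm{count}_p(v_j)/|v_j|$ for $p\in\{1,\dots,q\}$ and $f_j=\sum_{p=1}^q\mathrm{Var}(F^p_j)$. Then $f_{i+1}\ge f_i+\Omega(\varepsilon^2/q^4)$ for all $1\le i<k$ (with an absolute implied constant).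
   Context: $\mathrm{count}_p(w)$ is the number of occurrences of symbol $p$ in $w$. A matching $M$ between strings $a,b$ is a pair of increasing index sequences in $a$ and $b$ of equal length $|M|$ matching equal symbols. $\mathrm{adv}^{q,z}_M(a,b)=\frac{(2z+1)|M|-|a|-\frac{z+z^2}{q}|b|}{|a|}$, $\mathrm{adv}^{q,z}(a,b)=\max_M\mathrm{adv}^{q,z}_M(a,b)$, and for infinite $b$, $\mathrm{adv}^{q,z}(a,b)$ is the maximum over finite substrings $b'$ of $b$ of $\mathrm{adv}^{q,z}(a,b')$. $A^q_r=(1^r2^r\cdots q^r)^\infty$ and $A^q_{r,n}$ is its prefix of length $n$. *)

theory Defs
  imports "HOL-Probability.Probability"
begin

text \<open>Strings over the alphabet {1..q} are lists of naturals; positions are 0-indexed.\<close>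

definition count_sym :: "nat \<Rightarrow> nat list \<Rightarrow> nat" where
  "count_sym p w = count_list w p"

definition is_matching :: "nat list \<Rightarrow> nat list \<Rightarrow> nat list \<times> nat list \<Rightarrow> bool" where
  "is_matching a b M \<longleftrightarrow>
     (let is = fst M; js = snd M in
       length is = length js \<and> sorted_wrt (<) is \<and> sorted_wrt (<) js \<and>
       (\<forall>i\<in>set is. i < length a) \<and> (\<forall>j\<in>set js. j < length b) \<and>
       (\<forall>t<length is. a ! (is ! t) = b ! (js ! t)))"

definition matching_size :: "nat list \<times> nat list \<Rightarrow> nat" where
  "matching_size M = length (fst M)"

definition adv_M :: "nat \<Rightarrow> nat \<Rightarrow> nat list \<times> nat list \<Rightarrow> nat list \<Rightarrow> nat list \<Rightarrow> real" where
  "adv_M q z M a b =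
     ((2 * real z + 1) * real (matching_size M) - real (length a)
       - (real z + real z ^ 2) / real q * real (length b)) / real (length a)"

definition adv :: "nat \<Rightarrow> nat \<Rightarrow> nat list \<Rightarrow> nat list \<Rightarrow> real" where
  "adv q z a b = Max ((\<lambda>M. adv_M q z M a b) ` {M. is_matching a b M})"

text \<open>A^q_r = (1^r 2^r ... q^r)^\<infinity> and its prefix of length n.\<close>
definition A_inf :: "nat \<Rightarrow> nat \<Rightarrow> nat \<Rightarrow> nat" where
  "A_inf q r i = (i div r) mod q + 1"

definition A_pref :: "nat \<Rightarrow> nat \<Rightarrow> nat \<Rightarrow> nat list" where
  "A_pref q r n = map (A_inf q r) [0..<n]"

text \<open>Choose uniformly at random one of the consecutive non-overlapping length-l substrings
  into which u is split (uniform over positions, so equal blocks are counted with multiplicity).\<close>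
definition split_pmf :: "nat \<Rightarrow> nat list \<Rightarrow> nat list pmf" where
  "split_pmf l u = map_pmf (\<lambda>t. take l (drop (t * l) u)) (pmf_of_set {0..<length u div l})"

primrec walk :: "(nat \<Rightarrow> nat) \<Rightarrow> nat list \<Rightarrow> nat \<Rightarrow> nat list pmf" where
  "walk l v 0 = return_pmf v"
| "walk l v (Suc j) = bind_pmf (walk l v j) (split_pmf (l (Suc j)))"

definition freq :: "nat \<Rightarrow> nat list \<Rightarrow> real" where
  "freq p w = real (count_sym p w) / real (length w)"

definition fvar :: "nat \<Rightarrow> (nat \<Rightarrow> nat) \<Rightarrow> nat list \<Rightarrow> nat \<Rightarrow> real" where
  "fvar q l v j = (\<Sum>p=1..q. measure_pmf.variance (walk l v j) (freq p))"

end

theory Submission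
  imports Defs
begin

text \<open>Splitting every block of length \<open>l\<^sub>i\<close> into blocks of length \<open>l\<^sub>i\<^sub>+\<^sub>1\<close> increases \<open>f\<close> by
  the mean \<open>W\<close> of the squared deviations of child-block frequencies from parent-block frequencies
  (law of total variance), so it suffices to show that an advantage of \<open>\<epsilon> / q\<close> against
  \<open>A\<^sup>q\<^sub>r\<close> with \<open>r = r\<^sub>i\<^sub>+\<^sub>1\<close> forces \<open>W\<close> to be large.
  Take an optimal matching and split the weight \<open>2 z + 1\<close> of each matched pair: the fraction
  \<open>\<theta> = max 0 (1 - 1 / ((2 z + 1) \<alpha>))\<close> goes to the position in \<open>A\<close> and the rest to the position in
  \<open>v\<close>, where \<open>\<alpha>\<close> is the frequency of the matched symbol in the parent block of the \<open>v\<close>-position.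
  Over a period of \<open>A\<close> whose partners all lie in one parent block, the \<open>A\<close>-shares add up to at
  most \<open>(z + z\<^sup>2) r\<close> because the frequencies \<open>\<alpha>\<close> add up to at most one; over a child block whose
  partners all lie in one run of \<open>A\<close>, the \<open>v\<close>-shares add up to at most the block length plus a
  term controlled by the squared deviation of that block. Since the matching is monotone, only
  few periods and blocks violate these conditions, and comparing with the advantage gives
  \<open>W = \<Omega>(\<epsilon>\<^sup>2 / q\<^sup>4)\<close>.\<close>

section \<open>Blocks and the random walk\<close>

definition block :: "nat \<Rightarrow> nat list \<Rightarrow> nat \<Rightarrow> nat list" where
  "block l v t = take l (drop (t * l) v)"

lemma length_block: "(t + 1) * l \<le> length v \<Longrightarrow> length (block l v t) = l"
  by (simp add: block_def)

lemma block_block: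
  assumes "L = K * l" "t' < K"
  shows "block l (block L v t) t' = block l v (t * K + t')"
proof -
  have "t' * l + l \<le> L"
    using assms by (metis Suc_leI add.commute mult.commute mult_Suc_right mult_le_mono2)
  moreover have "t * L + t' * l = (t * K + t') * l"
    using assms by (simp add: algebra_simps)
  ultimately show ?thesis
    by (simp add: block_def drop_take min_absorb1 add.commute)
qed

lemma split_pmf_eq_block: "split_pmf l u = map_pmf (block l u) (pmf_of_set {..<length u div l})"
  unfolding split_pmf_def block_def[abs_def] by (simp add: atLeast0LessThan)

lemma pair_pmf_of_set:
  assumes "finite A" "A \<noteq> {}" "finite B" "B \<noteq> {}"
  shows "pair_pmf (pmf_of_set A) (pmf_of_set B) = pmf_of_set (A \<times> B)"
proof (rule pmf_eqI)
  fix x :: "'a \<times> 'b"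
  show "pmf (pair_pmf (pmf_of_set A) (pmf_of_set B)) x = pmf (pmf_of_set (A \<times> B)) x"
    using assms by (cases x) (simp add: pmf_pair card_cartesian_product indicator_def)
qed

lemma bij_betw_mult_add:
  fixes N K :: nat
  assumes "0 < K"
  shows "bij_betw (\<lambda>(t, t'). t * K + t') ({..<N} \<times> {..<K}) {..<N * K}"
proof (rule bij_betw_byWitness[where f' = "\<lambda>x. (x div K, x mod K)"])
  show "\<forall>x\<in>{..<N} \<times> {..<K}. (\<lambda>x. (x div K, x mod K)) ((\<lambda>(t, t'). t * K + t') x) = x"
    by auto
  show "\<forall>x\<in>{..<N * K}. (\<lambda>(t, t'). t * K + t') (x div K, x mod K) = x"
    by simp
  show "(\<lambda>(t, t'). t * K + t') ` ({..<N} \<times> {..<K}) \<subseteq> {..<N * K}"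
  proof clarsimp
    fix a b assume "a < N" "b < K"
    then have "a * K + b < (a + 1) * K" by simp
    also have "\<dots> \<le> N * K" using \<open>a < N\<close> by (intro mult_le_mono1) simp
    finally show "a * K + b < N * K" .
  qed
  show "(\<lambda>x. (x div K, x mod K)) ` {..<N * K} \<subseteq> {..<N} \<times> {..<K}"
    using assms by (auto simp: less_mult_imp_div_less)
qed

lemma bind_pmf_of_set_lessThan_mult:
  fixes N K :: nat
  assumes "0 < N" "0 < K"
  shows "bind_pmf (pmf_of_set {..<N}) (\<lambda>t. map_pmf (\<lambda>t'. g (t * K + t')) (pmf_of_set {..<K}))
       = map_pmf g (pmf_of_set {..<N * K})"
proof -
  have "bind_pmf (pmf_of_set {..<N}) (\<lambda>t. map_pmf (\<lambda>t'. g (t * K + t')) (pmf_of_set {..<K}))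
      = map_pmf g (map_pmf (\<lambda>(t, t'). t * K + t') (pair_pmf (pmf_of_set {..<N}) (pmf_of_set {..<K})))"
    by (simp add: pair_pmf_def map_pmf_def bind_assoc_pmf bind_return_pmf)
  also have "pair_pmf (pmf_of_set {..<N}) (pmf_of_set {..<K}) = pmf_of_set ({..<N} \<times> {..<K})"
    using assms by (intro pair_pmf_of_set) auto
  also have "map_pmf (\<lambda>(t, t'). t * K + t') (pmf_of_set ({..<N} \<times> {..<K})) = pmf_of_set {..<N * K}"
    using assms bij_betw_mult_add[OF assms(2), of N]
    by (subst map_pmf_of_set_inj) (auto simp: bij_betw_def)
  finally show ?thesis .
qed

lemma bind_uniform_block_split_pmf:
  assumes "length v = N * L" "L = K * l" "0 < N" "0 < K" "0 < l"
  shows "bind_pmf (map_pmf (block L v) (pmf_of_set {..<N})) (split_pmf l)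
       = map_pmf (block l v) (pmf_of_set {..<N * K})"
proof -
  have "split_pmf l (block L v t) = map_pmf (\<lambda>t'. block l v (t * K + t')) (pmf_of_set {..<K})"
    if "t \<in> set_pmf (pmf_of_set {..<N})" for t
  proof -
    have "t < N"
      using that \<open>0 < N\<close> by (simp add: lessThan_empty_iff)
    then have "(t + 1) * L \<le> length v"
      using assms(1) by (simp add: mult_le_mono1 del: mult_Suc)
    then have "length (block L v t) div l = K"
      using assms(2,5) by (simp add: length_block)
    then show ?thesis
      using \<open>0 < K\<close>
      by (auto simp: split_pmf_eq_block block_block[OF assms(2)] lessThan_empty_iff intro!: map_pmf_cong)
  qed
  then have "bind_pmf (map_pmf (block L v) (pmf_of_set {..<N})) (split_pmf l)
      = bind_pmf (pmf_of_set {..<N}) (\<lambda>t. map_pmf (\<lambda>t'. block l v (t * K + t')) (pmf_of_set {..<K}))"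
    by (simp add: bind_map_pmf cong: bind_pmf_cong)
  also have "\<dots> = map_pmf (block l v) (pmf_of_set {..<N * K})"
    by (rule bind_pmf_of_set_lessThan_mult[OF \<open>0 < N\<close> \<open>0 < K\<close>])
  finally show ?thesis .
qed

lemma walk_eq_uniform_block:
  assumes "l 1 dvd length v" "\<And>j. 1 \<le> j \<Longrightarrow> j < k \<Longrightarrow> l (Suc j) dvd l j"
    and "\<And>j. 1 \<le> j \<Longrightarrow> j \<le> k \<Longrightarrow> 0 < l j" "0 < length v" and "1 \<le> j" "j \<le> k"
  shows "l j dvd length v \<and> walk l v j = map_pmf (block (l j) v) (pmf_of_set {..<length v div l j})"
  using assms(5,6)
proof (induction j)
  case 0
  then show ?case by simp
next
  case (Suc j)
  show ?case
  proof (cases "j = 0")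
    case True
    then show ?thesis
      using assms(1) by (simp add: split_pmf_eq_block bind_return_pmf)
  next
    case False
    define L l' where "L = l j" and "l' = l (Suc j)"
    define N K where "N = length v div L" and "K = L div l'"
    have IH: "L dvd length v" "walk l v j = map_pmf (block L v) (pmf_of_set {..<N})"
      using Suc False by (auto simp: L_def N_def)
    have "l' dvd L" "0 < l'"
      using assms(2,3) Suc.prems False by (auto simp: L_def l'_def)
    then have LK: "L = K * l'" and vN: "length v = N * L" and "l' dvd length v"
      using IH(1) dvd_trans by (auto simp: K_def N_def)
    then have "0 < N" "0 < K"
      using assms(4) \<open>0 < l'\<close> by (auto intro!: Nat.gr0I)
    then have "walk l v (Suc j) = map_pmf (block l' v) (pmf_of_set {..<N * K})"
      using IH(2) bind_uniform_block_split_pmf[OF vN LK _ _ \<open>0 < l'\<close>] by (simp add: l'_def)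
    then show ?thesis
      using \<open>l' dvd length v\<close> vN LK \<open>0 < l'\<close> by (simp add: l'_def)
  qed
qed

section \<open>Block frequencies and the law of total variance\<close>

definition count_range :: "nat list \<Rightarrow> nat \<Rightarrow> nat \<Rightarrow> nat \<Rightarrow> real" where
  "count_range v p a len = (\<Sum>i<len. if v ! (a + i) = p then 1 else 0)"

definition block_freq :: "nat list \<Rightarrow> nat \<Rightarrow> nat \<Rightarrow> nat \<Rightarrow> real" where
  "block_freq v p l t = count_range v p (t * l) l / l"

lemma count_list_eq_sum_nth: "count_list xs p = (\<Sum>i<length xs. if xs ! i = p then 1 else (0::nat))"
  by (induction xs) (simp_all del: sum.lessThan_Suc add: sum.lessThan_Suc_shift)

lemma freq_block:
  assumes "(t + 1) * l \<le> length v"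
  shows "freq p (block l v t) = block_freq v p l t"
proof -
  have "real (count_sym p (block l v t)) = count_range v p (t * l) l"
    using assms unfolding count_sym_def count_list_eq_sum_nth count_range_def
    by (simp add: length_block block_def) (intro sum.cong, auto)
  then show ?thesis
    using assms by (simp add: freq_def block_freq_def length_block)
qed

lemma sum_lessThan_mult:
  fixes g :: "nat \<Rightarrow> 'a::comm_monoid_add"
  shows "(\<Sum>x<N * K. g x) = (\<Sum>a<N. \<Sum>b<K. g (a * K + b))"
proof -
  have "(\<Sum>x<N * K. g x) = (\<Sum>a<N. sum g {a * K..<a * K + K})"
    by (rule sum.nat_group[symmetric])
  then show ?thesis
    by (simp add: sum.atLeastLessThan_shift_0[of g] atLeast0LessThan)
qed

lemma count_range_mult: "count_range v p a (K * l) = (\<Sum>b<K. count_range v p (a + b * l) l)"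
  unfolding count_range_def by (subst sum_lessThan_mult) (simp add: add.assoc)

lemma sum_block_freq_children:
  assumes "0 < l"
  shows "(\<Sum>b<K. block_freq v p l (B * K + b)) = K * block_freq v p (K * l) B"
  using assms by (simp add: block_freq_def count_range_mult sum_divide_distrib[symmetric] algebra_simps)

lemma block_freq_nonneg: "0 \<le> block_freq v p l t"
  by (simp add: block_freq_def count_range_def sum_nonneg)

lemma sum_block_freq_le_1:
  assumes "finite S"
  shows "(\<Sum>s\<in>S. block_freq v s l t) \<le> 1"
proof -
  have "(\<Sum>s\<in>S. count_range v s (t * l) l) = (\<Sum>i<l. \<Sum>s\<in>S. if v ! (t * l + i) = s then 1 else 0)"
    unfolding count_range_def by (rule sum.swap)
  also have "\<dots> \<le> (\<Sum>i<l. 1)"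
    using assms by (intro sum_mono) simp
  finally show ?thesis
    by (cases "l = 0") (simp_all add: block_freq_def sum_divide_distrib[symmetric])
qed

lemma sum_sq_deviation_shift:
  fixes G :: "'a \<Rightarrow> real" and c \<mu> :: real
  assumes "(\<Sum>b\<in>A. G b) = card A * c"
  shows "(\<Sum>b\<in>A. (G b - \<mu>)\<^sup>2) = (\<Sum>b\<in>A. (G b - c)\<^sup>2) + card A * (c - \<mu>)\<^sup>2"
proof -
  have "(\<Sum>b\<in>A. (G b - \<mu>)\<^sup>2) = (\<Sum>b\<in>A. (G b - c)\<^sup>2 + 2 * (c - \<mu>) * G b - 2 * (c - \<mu>) * c + (c - \<mu>)\<^sup>2)"
    by (intro sum.cong) (auto simp: power2_eq_square algebra_simps)
  also have "\<dots> = (\<Sum>b\<in>A. (G b - c)\<^sup>2) + 2 * (c - \<mu>) * (\<Sum>b\<in>A. G b)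
                   - card A * (2 * (c - \<mu>) * c) + card A * (c - \<mu>)\<^sup>2"
    by (simp add: sum.distrib sum_subtractf sum_distrib_left)
  finally show ?thesis
    using assms by (simp add: algebra_simps)
qed

lemma variance_pmf_of_set_cong:
  fixes f g :: "'a \<Rightarrow> real"
  assumes "finite A" "A \<noteq> {}" "\<And>x. x \<in> A \<Longrightarrow> f x = g x"
  shows "measure_pmf.variance (pmf_of_set A) f = measure_pmf.variance (pmf_of_set A) g"
  using assms(3) by (simp add: integral_pmf_of_set[OF assms(2,1)])

lemma variance_pmf_of_set_lessThan_mult:
  fixes X Y :: "nat \<Rightarrow> real"
  assumes "0 < N" "0 < K" and group: "\<And>B. (\<Sum>b<K. X (B * K + b)) = K * Y B"
  shows "measure_pmf.variance (pmf_of_set {..<N * K}) X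
       = measure_pmf.variance (pmf_of_set {..<N}) Y + (\<Sum>t<N * K. (X t - Y (t div K))\<^sup>2) / (N * K)"
proof -
  define \<mu> where "\<mu> = (\<Sum>B<N. Y B) / N"
  have "(\<Sum>t<N * K. X t) = K * (\<Sum>B<N. Y B)"
    by (simp add: sum_lessThan_mult group sum_distrib_left)
  then have EX: "measure_pmf.expectation (pmf_of_set {..<N * K}) X = \<mu>"
    using assms by (simp add: integral_pmf_of_set \<mu>_def lessThan_empty_iff)
  have EY: "measure_pmf.expectation (pmf_of_set {..<N}) Y = \<mu>"
    using assms by (simp add: integral_pmf_of_set \<mu>_def lessThan_empty_iff)
  have "(\<Sum>t<N * K. (X t - \<mu>)\<^sup>2) = (\<Sum>B<N. (\<Sum>b<K. (X (B * K + b) - Y B)\<^sup>2) + K * (Y B - \<mu>)\<^sup>2)"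
    unfolding sum_lessThan_mult
    by (intro sum.cong refl sum_sq_deviation_shift[where A = "{..<K}", simplified]) (simp add: group)
  also have "\<dots> = (\<Sum>t<N * K. (X t - Y (t div K))\<^sup>2) + K * (\<Sum>B<N. (Y B - \<mu>)\<^sup>2)"
    using \<open>0 < K\<close> by (simp add: sum_lessThan_mult sum.distrib sum_distrib_left)
  finally show ?thesis
    using assms EX EY by (simp add: integral_pmf_of_set lessThan_empty_iff field_simps)
qed

definition refinement_sqdev :: "nat \<Rightarrow> nat list \<Rightarrow> nat \<Rightarrow> nat \<Rightarrow> real" where
  "refinement_sqdev q v K l =
     (\<Sum>t<length v div l. \<Sum>p=1..q. (block_freq v p l t - block_freq v p (K * l) (t div K))\<^sup>2)"

lemma refinement_sqdev_nonneg: "0 \<le> refinement_sqdev q v K l"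
  by (simp add: refinement_sqdev_def sum_nonneg)

lemma fvar_eq_block_variance:
  assumes "l 1 dvd length v" "\<And>j. 1 \<le> j \<Longrightarrow> j < k \<Longrightarrow> l (Suc j) dvd l j"
    and "\<And>j. 1 \<le> j \<Longrightarrow> j \<le> k \<Longrightarrow> 0 < l j" "0 < length v" and "1 \<le> j" "j \<le> k"
  shows "fvar q l v j =
    (\<Sum>p=1..q. measure_pmf.variance (pmf_of_set {..<length v div l j}) (block_freq v p (l j)))"
proof -
  define L N where "L = l j" and "N = length v div L"
  have "L dvd length v" and walk: "walk l v j = map_pmf (block L v) (pmf_of_set {..<N})"
    using walk_eq_uniform_block[of l v k j, OF assms] by (auto simp: L_def N_def)
  moreover have "0 < L"
    using assms(3,5,6) by (simp add: L_def)
  ultimately have vN: "length v = N * L" and "0 < N"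
    using assms(4) by (auto simp: N_def intro!: Nat.gr0I)
  have "measure_pmf.variance (map_pmf (block L v) (pmf_of_set {..<N})) (freq p)
      = measure_pmf.variance (pmf_of_set {..<N}) (block_freq v p L)" for p
  proof -
    have "freq p (block L v t) = block_freq v p L t" if "t \<in> {..<N}" for t
      using that vN by (intro freq_block) (simp add: mult_le_mono1 del: mult_Suc)
    then have "measure_pmf.variance (pmf_of_set {..<N}) (\<lambda>t. freq p (block L v t))
             = measure_pmf.variance (pmf_of_set {..<N}) (block_freq v p L)"
      using \<open>0 < N\<close> by (intro variance_pmf_of_set_cong) auto
    then show ?thesis by simp
  qed
  then show ?thesis
    unfolding fvar_def walk by (simp add: L_def N_def)
qed

lemma fvar_Suc_eq:
  assumes "l 1 dvd length v" "\<And>j. 1 \<le> j \<Longrightarrow> j < k \<Longrightarrow> l (Suc j) dvd l j"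
    and "\<And>j. 1 \<le> j \<Longrightarrow> j \<le> k \<Longrightarrow> 0 < l j" "0 < length v" and "1 \<le> i" "i < k"
  shows "fvar q l v (Suc i) = fvar q l v i
           + refinement_sqdev q v (l i div l (Suc i)) (l (Suc i)) / (length v div l (Suc i))"
proof -
  define L l' K N where "L = l i" and "l' = l (Suc i)" and "K = L div l'" and "N = length v div L"
  have "L dvd length v"
    using walk_eq_uniform_block[of l v k i, OF assms(1-5)] assms(6) by (simp add: L_def)
  moreover have "l' dvd L" "0 < l'"
    using assms(2,3,5,6) by (auto simp: L_def l'_def)
  ultimately have LK: "L = K * l'" and vN: "length v = N * L"
    by (auto simp: K_def N_def)
  then have "0 < N" "0 < K" and NK: "length v div l' = N * K"
    using assms(4) \<open>0 < l'\<close> by (auto intro!: Nat.gr0I)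
  have "measure_pmf.variance (pmf_of_set {..<N * K}) (block_freq v p l')
      = measure_pmf.variance (pmf_of_set {..<N}) (block_freq v p L)
        + (\<Sum>t<N * K. (block_freq v p l' t - block_freq v p L (t div K))\<^sup>2) / (real N * real K)" for p
    using \<open>0 < N\<close> \<open>0 < K\<close>
    by (rule variance_pmf_of_set_lessThan_mult[where X = "block_freq v p l'" and Y = "block_freq v p L"])
      (simp add: sum_block_freq_children[OF \<open>0 < l'\<close>] LK)
  then have "fvar q l v (Suc i) = (\<Sum>p=1..q. measure_pmf.variance (pmf_of_set {..<N}) (block_freq v p L)
       + (\<Sum>t<N * K. (block_freq v p l' t - block_freq v p L (t div K))\<^sup>2) / (real N * real K))"
    using fvar_eq_block_variance[of l v k "Suc i", OF assms(1-4)] assms(5,6) NK by (simp add: l'_def)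
  also have "\<dots> = fvar q l v i
      + (\<Sum>p=1..q. \<Sum>t<N * K. (block_freq v p l' t - block_freq v p L (t div K))\<^sup>2) / (real N * real K)"
    using fvar_eq_block_variance[of l v k i, OF assms(1-5)] assms(5,6)
    by (simp add: sum.distrib sum_divide_distrib L_def N_def)
  also have "(\<Sum>p=1..q. \<Sum>t<N * K. (block_freq v p l' t - block_freq v p L (t div K))\<^sup>2)
      = refinement_sqdev q v K l'"
    unfolding refinement_sqdev_def NK LK[symmetric] by (rule sum.swap)
  finally show ?thesis
    using NK by (simp add: K_def L_def l'_def)
qed

section \<open>Matchings\<close>

lemma length_le_if_sorted_bounded:
  assumes "sorted_wrt (<) xs" "\<forall>i\<in>set xs. i < n"
  shows "length xs \<le> n"
proof -
  have "length xs = card (set xs)"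
    using assms(1) by (simp add: strict_sorted_iff distinct_card)
  also have "\<dots> \<le> card {..<n}"
    using assms(2) by (intro card_mono) auto
  finally show ?thesis by simp
qed

lemma is_matching_length_le:
  assumes "is_matching a b M"
  shows "length (fst M) \<le> length a"
proof (rule length_le_if_sorted_bounded)
  show "sorted_wrt (<) (fst M)" "\<forall>i\<in>set (fst M). i < length a"
    using assms by (simp_all add: is_matching_def Let_def)
qed

lemma finite_matchings: "finite {M. is_matching a b M}"
proof (rule finite_subset)
  show "{M. is_matching a b M} \<subseteq> {xs. set xs \<subseteq> {..<length a} \<and> length xs \<le> length a} \<times>
                                    {ys. set ys \<subseteq> {..<length b} \<and> length ys \<le> length b}"
  proof clarify
    fix xs ys
    assume "is_matching a b (xs, ys)"
    then have "sorted_wrt (<) xs" "\<forall>i\<in>set xs. i < length a" "sorted_wrt (<) ys" "\<forall>j\<in>set ys. j < length b"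
      by (simp_all add: is_matching_def)
    then show "xs \<in> {xs. set xs \<subseteq> {..<length a} \<and> length xs \<le> length a} \<and>
               ys \<in> {ys. set ys \<subseteq> {..<length b} \<and> length ys \<le> length b}"
      by (auto intro: length_le_if_sorted_bounded)
  qed
  show "finite ({xs. set xs \<subseteq> {..<length a} \<and> length xs \<le> length a} \<times>
                {ys. set ys \<subseteq> {..<length b} \<and> length ys \<le> length b})"
    by (intro finite_cartesian_product finite_lists_length_le) auto
qed

lemma adv_attained: "\<exists>M. is_matching a b M \<and> adv q z a b = adv_M q z M a b"
proof -
  have "([], []) \<in> {M. is_matching a b M}"
    by (simp add: is_matching_def)
  then have "adv q z a b \<in> (\<lambda>M. adv_M q z M a b) ` {M. is_matching a b M}"
    unfolding adv_def using finite_matchings by (intro Max_in) auto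
  then show ?thesis by auto
qed

lemma adv_witness:
  assumes "0 < c" "c \<le> adv q z a b"
  obtains M where "is_matching a b M" "0 < length a"
    "c * length a \<le> (2 * real z + 1) * length (fst M) - length a - (real z + real z ^ 2) / q * length b"
proof -
  obtain M where M: "is_matching a b M" "c \<le> adv_M q z M a b"
    using adv_attained assms(2) by metis
  then have "0 < length a"
    using assms(1) by (auto simp: adv_M_def intro!: Nat.gr0I)
  with M show ?thesis
    using that by (simp add: adv_M_def matching_size_def le_divide_eq)
qed

lemma sum_nth_le_sum_lessThan:
  fixes g :: "nat \<Rightarrow> real"
  assumes "sorted_wrt (<) xs" "\<forall>i\<in>set xs. i < n" "\<And>x. 0 \<le> g x"
  shows "(\<Sum>t<length xs. g (xs ! t)) \<le> (\<Sum>x<n. g x)"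
proof -
  have "(\<Sum>t<length xs. g (xs ! t)) = sum g ((!) xs ` {..<length xs})"
    using assms(1) by (simp add: sum.reindex inj_on_nth strict_sorted_iff)
  also have "\<dots> \<le> (\<Sum>x<n. g x)"
    using assms by (intro sum_mono2) auto
  finally show ?thesis .
qed

definition next_idx :: "nat list \<Rightarrow> nat \<Rightarrow> nat" where
  "next_idx xs y =
     (if \<exists>t<length xs. y \<le> xs ! t then LEAST t. t < length xs \<and> y \<le> xs ! t else length xs - 1)"

lemma next_idx_less:
  assumes "0 < length xs"
  shows "next_idx xs y < length xs"
proof (cases "\<exists>t<length xs. y \<le> xs ! t")
  case True
  then have "(LEAST t. t < length xs \<and> y \<le> xs ! t) < length xs"
    by (rule LeastI2_ex) auto
  then show ?thesis
    using True by (simp add: next_idx_def)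
qed (use assms in \<open>auto simp: next_idx_def\<close>)

lemma next_idx_nth:
  assumes "sorted_wrt (<) xs" "t < length xs"
  shows "next_idx xs (xs ! t) = t"
proof -
  have "(LEAST t'. t' < length xs \<and> xs ! t \<le> xs ! t') = t"
  proof (rule Least_equality)
    show "t < length xs \<and> xs ! t \<le> xs ! t"
      using assms by simp
    show "t \<le> t'" if "t' < length xs \<and> xs ! t \<le> xs ! t'" for t'
      using assms that by (metis linorder_not_le sorted_wrt_nth_less)
  qed
  then show ?thesis
    using assms by (auto simp: next_idx_def)
qed

lemma mono_next_idx:
  assumes "0 < length xs"
  shows "mono (next_idx xs)"
proof (rule monoI)
  fix y y' :: nat
  assume "y \<le> y'"
  show "next_idx xs y \<le> next_idx xs y'"
  proof (cases "\<exists>t<length xs. y' \<le> xs ! t")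
    case True
    then have "\<exists>t<length xs. y \<le> xs ! t"
      using \<open>y \<le> y'\<close> by (meson order_trans)
    moreover have "(LEAST t. t < length xs \<and> y \<le> xs ! t) \<le> (LEAST t. t < length xs \<and> y' \<le> xs ! t)"
      using True \<open>y \<le> y'\<close> by (metis (mono_tags, lifting) LeastI_ex Least_le order_trans)
    ultimately show ?thesis
      using True by (simp add: next_idx_def)
  next
    case False
    then have "next_idx xs y' = length xs - 1"
      unfolding next_idx_def by auto
    then show ?thesis
      using next_idx_less[OF assms, of y] by simp
  qed
qed

text \<open>The partner in \<open>ys\<close> of the first entry of \<open>xs\<close> that is at least \<open>y\<close>; for a matching
  \<open>(xs, ys)\<close> this extends the matching to a monotone map on all positions.\<close>

definition partner :: "nat list \<Rightarrow> nat list \<Rightarrow> nat \<Rightarrow> nat" where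
  "partner xs ys y = ys ! next_idx xs y"

lemma partner_nth: "sorted_wrt (<) xs \<Longrightarrow> t < length xs \<Longrightarrow> partner xs ys (xs ! t) = ys ! t"
  by (simp add: partner_def next_idx_nth)

lemma partner_less:
  assumes "0 < length xs" "length ys = length xs" "\<forall>j\<in>set ys. j < n"
  shows "partner xs ys y < n"
  using next_idx_less[OF assms(1), of y] assms(2,3) by (simp add: partner_def)

lemma mono_partner:
  assumes "sorted_wrt (<) xs" "sorted_wrt (<) ys" "length ys = length xs" "0 < length xs"
  shows "mono (partner xs ys)"
proof
  fix y y' :: nat
  assume "y \<le> y'"
  then have "next_idx xs y \<le> next_idx xs y'" "next_idx xs y' < length ys"
    using mono_next_idx[OF assms(4)] next_idx_less[OF assms(4)] assms(3) by (auto dest: monoD)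
  then show "partner xs ys y \<le> partner xs ys y'"
    using sorted_wrt_nth_less[OF assms(2), of "next_idx xs y" "next_idx xs y'"]
    by (cases "next_idx xs y = next_idx xs y'") (auto simp: partner_def)
qed

section \<open>Charging the matched pairs\<close>

definition excess_weight :: "real \<Rightarrow> real \<Rightarrow> real" where
  "excess_weight D a = (if 1 < D * a then 1 - 1 / (D * a) else 0)"

lemma excess_weight_nonneg: "0 \<le> excess_weight D a"
  by (simp add: excess_weight_def)

lemma excess_weight_le_1: "excess_weight D a \<le> 1"
  by (simp add: excess_weight_def)

lemma excess_weight_complement: "D * (1 - excess_weight D a) * a \<le> 1"
  by (simp add: excess_weight_def mult.assoc)

text \<open>If \<open>t\<close> of the weights are positive, then \<open>\<Sum> 1 / \<alpha> s \<ge> t\<^sup>2\<close> by Cauchy-Schwarz, so the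
  left-hand side is at most \<open>(2 z + 1) t - t\<^sup>2\<close>, whose maximum over integers \<open>t\<close> is \<open>z + z\<^sup>2\<close>.\<close>

lemma sum_excess_weight_le:
  fixes \<alpha> :: "'a \<Rightarrow> real"
  assumes "finite S" "\<And>s. s \<in> S \<Longrightarrow> 0 \<le> \<alpha> s" "(\<Sum>s\<in>S. \<alpha> s) \<le> 1"
  shows "(2 * real z + 1) * (\<Sum>s\<in>S. excess_weight (2 * real z + 1) (\<alpha> s)) \<le> real z + real z ^ 2"
proof -
  define D where "D = 2 * real z + 1"
  define P where "P = {s\<in>S. 1 < D * \<alpha> s}"
  define t where "t = real (card P)"
  have pos: "0 < \<alpha> s" if "s \<in> P" for s
    using that assms(2) by (fastforce simp: P_def D_def intro: order.not_eq_order_implies_strict)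
  have inv: "2 * t - t\<^sup>2 * \<alpha> s \<le> 1 / \<alpha> s" if "s \<in> P" for s
  proof -
    have "(2 * t - t\<^sup>2 * \<alpha> s) * \<alpha> s \<le> 1"
      using zero_le_power2[of "1 - t * \<alpha> s"] by (simp add: power2_eq_square algebra_simps)
    then show ?thesis
      using pos[OF that] by (simp add: field_simps)
  qed
  have "(\<Sum>s\<in>P. \<alpha> s) \<le> (\<Sum>s\<in>S. \<alpha> s)"
    using assms(1,2) by (intro sum_mono2) (auto simp: P_def)
  then have "t\<^sup>2 * (\<Sum>s\<in>P. \<alpha> s) \<le> t\<^sup>2"
    using assms(3) by (simp add: mult_left_le)
  have "D * (\<Sum>s\<in>S. excess_weight D (\<alpha> s)) = D * (\<Sum>s\<in>P. 1 - 1 / (D * \<alpha> s))"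
    unfolding P_def excess_weight_def using assms(1) by (simp add: sum.inter_filter)
  also have "\<dots> = D * t - (\<Sum>s\<in>P. 1 / \<alpha> s)"
    by (simp add: sum_subtractf right_diff_distrib sum_distrib_left t_def D_def)
  also have "\<dots> \<le> D * t - (\<Sum>s\<in>P. 2 * t - t\<^sup>2 * \<alpha> s)"
    using inv by (simp add: sum_mono)
  also have "\<dots> \<le> D * t - t\<^sup>2"
    using \<open>t\<^sup>2 * (\<Sum>s\<in>P. \<alpha> s) \<le> t\<^sup>2\<close>
    by (simp add: sum_subtractf sum_distrib_left[symmetric] t_def power2_eq_square)
  also have "\<dots> \<le> real z + real z ^ 2"
  proof -
    have "0 \<le> (t - z) * (t - z - 1)"
      by (cases "card P \<le> z") (auto simp: t_def intro: mult_nonpos_nonpos)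
    then show ?thesis
      by (simp add: D_def power2_eq_square algebra_simps)
  qed
  finally show ?thesis
    by (simp add: D_def)
qed

lemma abs_le_am_gm:
  fixes x \<rho> :: real
  assumes "0 < \<rho>"
  shows "\<bar>x\<bar> \<le> \<rho> / 2 + x\<^sup>2 / (2 * \<rho>)"
proof -
  have "2 * \<rho> * \<bar>x\<bar> \<le> x\<^sup>2 + \<rho>\<^sup>2"
    using zero_le_power2[of "\<bar>x\<bar> - \<rho>"] by (simp add: power2_eq_square algebra_simps)
  then show ?thesis
    using assms by (simp add: field_simps power2_eq_square)
qed

lemma excess_weight_complement_le:
  assumes "0 < \<rho>" "0 \<le> D"
  shows "D * (1 - excess_weight D a) * f \<le> 1 + D * (\<rho> / 2 + (f - a)\<^sup>2 / (2 * \<rho>))"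
proof -
  define w where "w = D * (1 - excess_weight D a)"
  have "0 \<le> w" "w \<le> D"
    using assms(2) excess_weight_nonneg[of D a] excess_weight_le_1[of D a]
    by (auto simp: w_def mult_left_le)
  have "w * f = w * a + w * (f - a)"
    by (simp add: algebra_simps)
  also have "\<dots> \<le> 1 + D * \<bar>f - a\<bar>"
    using excess_weight_complement[of D a] \<open>0 \<le> w\<close> \<open>w \<le> D\<close>
    by (smt (verit) abs_ge_self abs_not_less_zero mult_left_mono mult_right_mono w_def)
  also have "\<dots> \<le> 1 + D * (\<rho> / 2 + (f - a)\<^sup>2 / (2 * \<rho>))"
    using abs_le_am_gm[OF assms(1)] assms(2) by (simp add: mult_left_mono)
  finally show ?thesis
    by (simp add: w_def)
qed

text \<open>On each chunk where the monotone \<open>f\<close> is not constant it increases by at least one, so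
  there are at most \<open>f (C * Q) - f 0\<close> such chunks.\<close>

lemma sum_chunks_telescope:
  fixes g :: "nat \<Rightarrow> real" and f :: "nat \<Rightarrow> nat"
  assumes "mono f" "0 < Q" "0 \<le> E"
    and const: "\<And>c. (\<And>y. y < Q \<Longrightarrow> f (c * Q + y) = f (c * Q)) \<Longrightarrow> (\<Sum>y<Q. g (c * Q + y)) \<le> b c"
    and jump: "\<And>c. (\<Sum>y<Q. g (c * Q + y)) \<le> b c + E"
  shows "(\<Sum>x<C * Q. g x) \<le> (\<Sum>c<C. b c) + E * (real (f (C * Q)) - real (f 0))"
proof -
  have chunk: "(\<Sum>y<Q. g (c * Q + y)) \<le> b c + E * (real (f (Suc c * Q)) - real (f (c * Q)))" for c
  proof (cases "\<forall>y<Q. f (c * Q + y) = f (c * Q)")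
    case True
    have "f (c * Q) \<le> f (Suc c * Q)"
      using assms(1) by (simp add: monoD)
    then have "0 \<le> E * (real (f (Suc c * Q)) - real (f (c * Q)))"
      using assms(3) by simp
    then show ?thesis
      using const[of c] True by simp
  next
    case False
    then obtain y where "y < Q" "f (c * Q + y) \<noteq> f (c * Q)"
      by blast
    moreover have "f (c * Q) \<le> f (c * Q + y)" "f (c * Q + y) \<le> f (Suc c * Q)"
      using \<open>y < Q\<close> assms(1) by (simp_all add: monoD)
    ultimately have "1 \<le> real (f (Suc c * Q)) - real (f (c * Q))"
      by linarith
    then show ?thesis
      using jump[of c] mult_left_mono[OF _ assms(3)] by fastforce
  qed
  have "(\<Sum>x<C * Q. g x) = (\<Sum>c<C. \<Sum>y<Q. g (c * Q + y))"
    by (rule sum_lessThan_mult)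
  also have "\<dots> \<le> (\<Sum>c<C. b c + E * (real (f (Suc c * Q)) - real (f (c * Q))))"
    by (intro sum_mono chunk)
  also have "\<dots> = (\<Sum>c<C. b c) + E * (real (f (C * Q)) - real (f 0))"
    using sum_lessThan_telescope[of "\<lambda>c. real (f (c * Q))" C]
    by (simp add: sum.distrib sum_distrib_left[symmetric])
  finally show ?thesis .
qed

lemma A_inf_period:
  assumes "a < q" "b < r"
  shows "A_inf q r (c * (q * r) + (a * r + b)) = Suc a"
proof -
  have eq: "c * (q * r) + (a * r + b) = b + (c * q + a) * r"
    by (simp add: algebra_simps)
  have "(c * (q * r) + (a * r + b)) div r = c * q + a"
    unfolding eq using assms(2) by simp
  then show ?thesis
    using assms(1) by (simp add: A_inf_def)
qed

lemma sum_A_inf_period: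
  fixes h :: "nat \<Rightarrow> real"
  shows "(\<Sum>y<q * r. h (A_inf q r (c * (q * r) + y))) = r * (\<Sum>s\<in>{1..q}. h s)"
proof -
  have "(\<Sum>y<q * r. h (A_inf q r (c * (q * r) + y))) = (\<Sum>a<q. \<Sum>b<r. h (Suc a))"
    unfolding sum_lessThan_mult by (intro sum.cong refl) (simp add: A_inf_period)
  then show ?thesis
    by (simp add: sum_distrib_left sum.atLeast1_atMost_eq)
qed

lemma sum_A_side_charge_le:
  fixes B :: "nat \<Rightarrow> nat" and \<theta> :: "nat \<Rightarrow> nat \<Rightarrow> real"
  assumes "mono B" "\<And>j. B j < N" "0 < q" "0 < r" "0 \<le> D"
    and \<theta>: "\<And>b s. 0 \<le> \<theta> b s" "\<And>b s. \<theta> b s \<le> 1" "\<And>b. D * (\<Sum>s\<in>{1..q}. \<theta> b s) \<le> c"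
  shows "(\<Sum>j<n. D * \<theta> (B j) (A_inf q r j)) \<le> c * n / q + c * r + D * q * r * N"
proof -
  define Q C where "Q = q * r" and "C = n div Q + 1"
  define g where "g j = D * \<theta> (B j) (A_inf q r j)" for j
  have "0 < Q"
    using assms(3,4) by (simp add: Q_def)
  have "0 \<le> c"
    using \<theta>(3)[of 0] \<theta>(1) assms(5) by (smt (verit) mult_nonneg_nonneg sum_nonneg)
  have "n \<le> C * Q"
    using dividend_less_div_times[OF \<open>0 < Q\<close>, of n] by (simp add: C_def)
  then have "(\<Sum>j<n. g j) \<le> (\<Sum>j<C * Q. g j)"
    using assms(5) \<theta>(1) by (intro sum_mono2) (auto simp: g_def)
  also have "\<dots> \<le> (\<Sum>i<C. c * r) + D * Q * (real (B (C * Q)) - real (B 0))"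
  proof (rule sum_chunks_telescope[OF assms(1) \<open>0 < Q\<close>])
    fix i
    assume "\<And>y. y < Q \<Longrightarrow> B (i * Q + y) = B (i * Q)"
    then have "(\<Sum>y<Q. g (i * Q + y)) = (\<Sum>y<q * r. D * \<theta> (B (i * Q)) (A_inf q r (i * (q * r) + y)))"
      by (simp add: g_def Q_def)
    also have "\<dots> = r * (D * (\<Sum>s\<in>{1..q}. \<theta> (B (i * Q)) s))"
      using sum_A_inf_period[of "\<lambda>s. D * \<theta> (B (i * Q)) s" q r i] by (simp add: sum_distrib_left)
    also have "\<dots> \<le> c * r"
      using mult_left_mono[OF \<theta>(3)[of "B (i * Q)"], of r] by (simp add: mult.commute)
    finally show "(\<Sum>y<Q. g (i * Q + y)) \<le> c * r" .
  next
    fix i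
    have "(\<Sum>y<Q. g (i * Q + y)) \<le> (\<Sum>y<Q. D)"
      using assms(5) \<theta>(2) by (intro sum_mono) (simp add: g_def mult_left_le)
    then show "(\<Sum>y<Q. g (i * Q + y)) \<le> c * r + D * Q"
      using \<open>0 \<le> c\<close> by (simp add: mult.commute add_increasing)
  qed (use assms(5) in simp)
  also have "\<dots> \<le> c * n / q + c * r + D * q * r * N"
  proof -
    have "real C \<le> n / Q + 1"
      using of_nat_div_le_of_nat[of n Q] by (simp add: C_def)
    then have "(\<Sum>i<C. c * r) \<le> (n / Q + 1) * (c * r)"
      using \<open>0 \<le> c\<close> by (simp add: mult_right_mono)
    also have "\<dots> = c * n / q + c * r"
      using assms(3,4) by (simp add: Q_def field_simps)
    finally have "(\<Sum>i<C. c * r) \<le> c * n / q + c * r" .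
    moreover have "D * Q * (real (B (C * Q)) - real (B 0)) \<le> D * Q * N"
      using assms(2)[of "C * Q"] assms(5) by (intro mult_left_mono) auto
    ultimately show ?thesis
      by (simp add: Q_def)
  qed
  finally show ?thesis
    by (simp add: g_def)
qed

lemma sum_block_charge_le:
  fixes D \<rho> :: real and v :: "nat list" and K \<beta> :: nat
  assumes "0 < \<rho>" "0 \<le> D" "s \<in> {1..q}" "0 < l"
  defines "a \<equiv> block_freq v s (K * l) (\<beta> div K)"
  shows "(\<Sum>y<l. D * (1 - excess_weight D a) * (if v ! (\<beta> * l + y) = s then 1 else 0))
       \<le> l + D * l * (\<rho> / 2
            + (\<Sum>p=1..q. (block_freq v p l \<beta> - block_freq v p (K * l) (\<beta> div K))\<^sup>2) / (2 * \<rho>))"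
proof -
  have "(\<Sum>y<l. D * (1 - excess_weight D a) * (if v ! (\<beta> * l + y) = s then 1 else 0))
      = l * (D * (1 - excess_weight D a) * block_freq v s l \<beta>)"
    using assms(4) by (simp add: block_freq_def count_range_def sum_distrib_left[symmetric])
  also have "\<dots> \<le> l * (1 + D * (\<rho> / 2 + (block_freq v s l \<beta> - a)\<^sup>2 / (2 * \<rho>)))"
    using excess_weight_complement_le[OF assms(1,2)] by (simp add: mult_left_mono)
  also have "\<dots> \<le> l + D * l * (\<rho> / 2
            + (\<Sum>p=1..q. (block_freq v p l \<beta> - block_freq v p (K * l) (\<beta> div K))\<^sup>2) / (2 * \<rho>))"
  proof -
    have "(block_freq v s l \<beta> - a)\<^sup>2 \<le> (\<Sum>p=1..q. (block_freq v p l \<beta> - block_freq v p (K * l) (\<beta> div K))\<^sup>2)"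
      unfolding a_def using assms(3) by (rule member_le_sum) auto
    then show ?thesis
      using assms(1,2) by (simp add: algebra_simps divide_right_mono mult_left_mono)
  qed
  finally show ?thesis .
qed

lemma sum_v_side_charge_le:
  fixes U :: "nat \<Rightarrow> nat" and D R \<rho> :: real
  assumes "mono U" "\<And>x. real (U x) \<le> R" "length v = M * l" "0 < l" "0 < q" "1 \<le> D" "0 < \<rho>"
  defines "\<sigma> x \<equiv> U x mod q + 1"
  shows "(\<Sum>x<length v. D * (1 - excess_weight D (block_freq v (\<sigma> x) (K * l) (x div (K * l))))
                         * (if v ! x = \<sigma> x then 1 else 0))
       \<le> length v + D * (length v * \<rho> / 2 + l * refinement_sqdev q v K l / (2 * \<rho>)) + (D - 1) * l * R"
proof -
  define a where "a s B = block_freq v s (K * l) B" for s B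
  define g where "g x = D * (1 - excess_weight D (a (\<sigma> x) (x div (K * l)))) * (if v ! x = \<sigma> x then 1 else 0)"
    for x
  define dev where "dev \<beta> = (\<Sum>p=1..q. (block_freq v p l \<beta> - a p (\<beta> div K))\<^sup>2)" for \<beta>
  define b where "b \<beta> = l + D * l * (\<rho> / 2 + dev \<beta> / (2 * \<rho>))" for \<beta>
  have dev_nonneg: "0 \<le> dev \<beta>" for \<beta>
    by (simp add: dev_def sum_nonneg)
  have "(\<Sum>x<M * l. g x) \<le> (\<Sum>\<beta><M. b \<beta>) + (D - 1) * l * (real (U (M * l)) - real (U 0))"
  proof (rule sum_chunks_telescope[OF assms(1) assms(4)])
    show "0 \<le> (D - 1) * l"
      using assms(6) by simp
  next
    fix \<beta>
    assume const: "\<And>y. y < l \<Longrightarrow> U (\<beta> * l + y) = U (\<beta> * l)"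
    define s where "s = \<sigma> (\<beta> * l)"
    have "s \<in> {1..q}"
      using mod_less_divisor[OF assms(5)] by (simp add: s_def \<sigma>_def Suc_leI)
    have "(\<beta> * l + y) div (K * l) = \<beta> div K" if "y < l" for y
      using that by (simp add: mult.commute[of K l] div_mult2_eq)
    then have "(\<Sum>y<l. g (\<beta> * l + y))
        = (\<Sum>y<l. D * (1 - excess_weight D (a s (\<beta> div K))) * (if v ! (\<beta> * l + y) = s then 1 else 0))"
      by (intro sum.cong refl) (simp add: g_def s_def \<sigma>_def const)
    also have "\<dots> \<le> b \<beta>"
      using sum_block_charge_le[OF assms(7) _ \<open>s \<in> {1..q}\<close> assms(4)] assms(6)
      by (simp add: b_def dev_def a_def)
    finally show "(\<Sum>y<l. g (\<beta> * l + y)) \<le> b \<beta>" .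
  next
    fix \<beta>
    have "(\<Sum>y<l. g (\<beta> * l + y)) \<le> (\<Sum>y<l. D)"
      using assms(6) excess_weight_nonneg excess_weight_le_1 by (intro sum_mono) (simp add: g_def mult_left_le)
    also have "\<dots> \<le> b \<beta> + (D - 1) * l"
      using assms(6,7) dev_nonneg[of \<beta>] by (simp add: b_def algebra_simps)
    finally show "(\<Sum>y<l. g (\<beta> * l + y)) \<le> b \<beta> + (D - 1) * l" .
  qed
  also have "\<dots> \<le> M * l + D * (M * l * \<rho> / 2 + l * (\<Sum>\<beta><M. dev \<beta>) / (2 * \<rho>)) + (D - 1) * l * R"
  proof -
    have "(\<Sum>\<beta><M. b \<beta>) = M * l + D * (M * l * \<rho> / 2 + l * (\<Sum>\<beta><M. dev \<beta>) / (2 * \<rho>))"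
      by (simp add: b_def sum.distrib sum_distrib_left[symmetric] sum_divide_distrib[symmetric] algebra_simps)
    moreover have "(D - 1) * l * (real (U (M * l)) - real (U 0)) \<le> (D - 1) * l * R"
      using assms(2)[of "M * l"] assms(6) by (intro mult_left_mono) auto
    ultimately show ?thesis
      by simp
  qed
  also have "(\<Sum>\<beta><M. dev \<beta>) = refinement_sqdev q v K l"
    using assms(3,4) by (simp add: refinement_sqdev_def dev_def a_def)
  finally show ?thesis
    using assms(3) by (simp add: g_def a_def)
qed

text \<open>\<open>\<sigma> x\<close> is the symbol of \<open>A\<close> at the position that \<open>partner\<close> assigns to position \<open>x\<close> of \<open>v\<close>.\<close>

lemma matching_charge_split:
  fixes \<theta> :: "nat \<Rightarrow> nat \<Rightarrow> real" and D :: real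
  assumes match: "is_matching v (A_pref q r n) (is, js)"
    and "0 \<le> D" "\<And>b s. 0 \<le> \<theta> b s" "\<And>b s. \<theta> b s \<le> 1"
  defines "\<sigma> x \<equiv> partner is js x div r mod q + 1"
  shows "D * length is \<le> (\<Sum>j<n. D * \<theta> (partner js is j div L) (A_inf q r j))
           + (\<Sum>x<length v. D * (1 - \<theta> (x div L) (\<sigma> x)) * (if v ! x = \<sigma> x then 1 else 0))"
proof -
  define T where "T = length is"
  have "length js = T" "sorted_wrt (<) is" "sorted_wrt (<) js"
    and is_bound: "\<forall>i\<in>set is. i < length v" and js_bound: "\<forall>j\<in>set js. j < n"
    and sym: "\<And>t. t < T \<Longrightarrow> v ! (is ! t) = A_inf q r (js ! t)"
    using match by (auto simp: is_matching_def T_def A_pref_def)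
  have partner_js: "partner js is (js ! t) = is ! t" and \<sigma>_is: "\<sigma> (is ! t) = v ! (is ! t)" if "t < T" for t
    using that sym[OF that] partner_nth \<open>sorted_wrt (<) is\<close> \<open>sorted_wrt (<) js\<close> \<open>length js = T\<close>
    by (simp_all add: \<sigma>_def A_inf_def T_def)
  have "(\<Sum>t<T. D * \<theta> (is ! t div L) (v ! (is ! t)))
      = (\<Sum>t<length js. D * \<theta> (partner js is (js ! t) div L) (A_inf q r (js ! t)))"
    using partner_js sym \<open>length js = T\<close> by (intro sum.cong) auto
  also have "\<dots> \<le> (\<Sum>j<n. D * \<theta> (partner js is j div L) (A_inf q r j))"
    using \<open>sorted_wrt (<) js\<close> js_bound by (rule sum_nth_le_sum_lessThan) (simp add: assms(2,3))
  finally have A: "(\<Sum>t<T. D * \<theta> (is ! t div L) (v ! (is ! t)))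
      \<le> (\<Sum>j<n. D * \<theta> (partner js is j div L) (A_inf q r j))" .
  have "(\<Sum>t<T. D * (1 - \<theta> (is ! t div L) (v ! (is ! t))))
      = (\<Sum>t<length is. D * (1 - \<theta> (is ! t div L) (\<sigma> (is ! t)))
                          * (if v ! (is ! t) = \<sigma> (is ! t) then 1 else 0))"
    using \<sigma>_is by (intro sum.cong) (auto simp: T_def)
  also have "\<dots> \<le> (\<Sum>x<length v. D * (1 - \<theta> (x div L) (\<sigma> x)) * (if v ! x = \<sigma> x then 1 else 0))"
    using \<open>sorted_wrt (<) is\<close> is_bound by (rule sum_nth_le_sum_lessThan) (simp add: assms(2,4))
  finally have V: "(\<Sum>t<T. D * (1 - \<theta> (is ! t div L) (v ! (is ! t))))
      \<le> (\<Sum>x<length v. D * (1 - \<theta> (x div L) (\<sigma> x)) * (if v ! x = \<sigma> x then 1 else 0))" .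
  have "D * T = (\<Sum>t<T. D * \<theta> (is ! t div L) (v ! (is ! t)))
                + (\<Sum>t<T. D * (1 - \<theta> (is ! t div L) (v ! (is ! t))))"
    by (simp add: sum.distrib[symmetric] algebra_simps)
  with A V show ?thesis
    by (simp add: T_def)
qed

lemma matching_size_bound:
  fixes \<rho> D :: real and z :: nat
  assumes match: "is_matching v (A_pref q r n) M"
    and v: "length v = N * (K * l)" and "0 < N" "0 < K" "0 < l" "0 < r" "0 < q" "0 < \<rho>"
  defines "D \<equiv> 2 * real z + 1"
  shows "D * length (fst M) \<le> (real z + real z ^ 2) * n / q + (real z + real z ^ 2) * r + D * q * r * N
           + length v + D * (length v * \<rho> / 2 + l * refinement_sqdev q v K l / (2 * \<rho>))
           + (D - 1) * l * (n / r)"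
proof (cases "fst M = []")
  case True
  then show ?thesis
    using \<open>0 < \<rho>\<close> refinement_sqdev_nonneg[of q v K l] by (simp add: D_def)
next
  case False
  obtain "is" js where M: "M = (is, js)"
    by fastforce
  define L where "L = K * l"
  define \<theta> where "\<theta> b s = excess_weight D (block_freq v s L b)" for b s
  define B where "B j = partner js is j div L" for j
  define U where "U x = partner is js x div r" for x
  have len: "length js = length is" "length is = length js" and "0 < length is" "0 < length js"
    and sorted: "sorted_wrt (<) is" "sorted_wrt (<) js"
    and bounds: "\<forall>i\<in>set is. i < length v" "\<forall>j\<in>set js. j < n"
    using match False by (auto simp: is_matching_def M A_pref_def)
  have "D * length is \<le> (\<Sum>j<n. D * \<theta> (B j) (A_inf q r j))
      + (\<Sum>x<length v. D * (1 - \<theta> (x div L) (U x mod q + 1)) * (if v ! x = U x mod q + 1 then 1 else 0))"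
    using matching_charge_split[OF match[unfolded M], of D \<theta> L]
    by (simp add: D_def \<theta>_def B_def U_def excess_weight_nonneg excess_weight_le_1)
  moreover have "(\<Sum>j<n. D * \<theta> (B j) (A_inf q r j))
      \<le> (real z + real z ^ 2) * n / q + (real z + real z ^ 2) * r + D * q * r * N"
  proof (rule sum_A_side_charge_le)
    show "mono B"
      using mono_partner[OF sorted(2,1) len(2) \<open>0 < length js\<close>] by (simp add: B_def mono_def div_le_mono)
    show "B j < N" for j
      using partner_less[OF \<open>0 < length js\<close> len(2) bounds(1), of j] v
      by (simp add: B_def L_def less_mult_imp_div_less)
    show "D * (\<Sum>s\<in>{1..q}. \<theta> b s) \<le> real z + real z ^ 2" for b
      unfolding \<theta>_def D_def by (rule sum_excess_weight_le) (simp_all add: block_freq_nonneg sum_block_freq_le_1)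
  qed (use \<open>0 < q\<close> \<open>0 < r\<close> in \<open>simp_all add: D_def \<theta>_def excess_weight_nonneg excess_weight_le_1\<close>)
  moreover have "(\<Sum>x<length v. D * (1 - \<theta> (x div L) (U x mod q + 1)) * (if v ! x = U x mod q + 1 then 1 else 0))
      \<le> length v + D * (length v * \<rho> / 2 + l * refinement_sqdev q v K l / (2 * \<rho>)) + (D - 1) * l * (n / r)"
  proof -
    have "mono U"
      using mono_partner[OF sorted len(1) \<open>0 < length is\<close>] by (simp add: U_def mono_def div_le_mono)
    moreover have "real (U x) \<le> n / r" for x
    proof -
      have "partner is js x < n"
        using partner_less[OF \<open>0 < length is\<close> len(1) bounds(2)] .
      then have "real (partner is js x) / r \<le> n / r"
        by (simp add: divide_right_mono)
      then show ?thesis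
        using of_nat_div_le_of_nat[where 'a = real, of "partner is js x" r] by (simp add: U_def)
    qed
    ultimately show ?thesis
      using sum_v_side_charge_le[of U "n / r" v "N * K" l q D \<rho> K] v \<open>0 < l\<close> \<open>0 < q\<close> \<open>0 < \<rho>\<close>
      by (simp add: D_def \<theta>_def L_def)
  qed
  ultimately show ?thesis
    by (simp add: M)
qed

section \<open>The gain in variance\<close>

lemma length_le_of_adv_nonneg:
  fixes q z n m T \<epsilon> :: real
  assumes "0 < q" "1 \<le> z" "0 \<le> n" "0 \<le> \<epsilon>" "0 \<le> m" "T \<le> m"
    and adv: "\<epsilon> / q * m \<le> (2 * z + 1) * T - m - (z + z\<^sup>2) / q * n"
  shows "n \<le> q * m"
proof -
  have "(2 * z + 1) * T \<le> (2 * z + 1) * m" "0 \<le> \<epsilon> / q * m"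
    using assms(1,2,4-6) by simp_all
  then have "(z + z\<^sup>2) / q * n \<le> 2 * z * m"
    using adv by (simp add: algebra_simps)
  then have "(z + z\<^sup>2) * n \<le> 2 * z * (q * m)"
    using \<open>0 < q\<close> by (simp add: field_simps)
  moreover have "z * n \<le> z\<^sup>2 * n"
    using assms(2,3) by (intro mult_right_mono) (auto simp: power2_eq_square)
  ultimately have "z * n \<le> z * (q * m)"
    by (simp add: algebra_simps)
  then show ?thesis
    using assms(2) by simp
qed

lemma matching_error_terms_le:
  fixes q z n m r L N l \<epsilon> :: real
  assumes "0 < q" "0 \<le> z" "z + 1 \<le> q" "0 < \<epsilon>" "0 < r" "0 \<le> n" "0 \<le> N" "n \<le> q * m"
    and "r \<le> \<epsilon>\<^sup>2 * L" "L \<le> m" "N * L = m" "l = \<epsilon>\<^sup>2 * r"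
  shows "(z + z\<^sup>2) * r + (2 * z + 1) * q * r * N + 2 * z * l * (n / r) \<le> 5 * q\<^sup>2 * (\<epsilon>\<^sup>2 * m)"
proof -
  have "2 * z + 1 \<le> 2 * q" "z + z\<^sup>2 \<le> q\<^sup>2"
    using assms(2,3) mult_mono[of z q "z + 1" q] by (auto simp: power2_eq_square algebra_simps)
  have "r * N \<le> \<epsilon>\<^sup>2 * m"
    using mult_right_mono[OF \<open>r \<le> \<epsilon>\<^sup>2 * L\<close> \<open>0 \<le> N\<close>] by (simp add: \<open>N * L = m\<close>[symmetric] algebra_simps)
  have "(z + z\<^sup>2) * r \<le> q\<^sup>2 * (\<epsilon>\<^sup>2 * m)"
    using \<open>z + z\<^sup>2 \<le> q\<^sup>2\<close> \<open>r \<le> \<epsilon>\<^sup>2 * L\<close> \<open>L \<le> m\<close> \<open>0 < r\<close> \<open>0 < \<epsilon>\<close>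
    by (intro mult_mono) (auto intro: order_trans mult_left_mono)
  moreover have "(2 * z + 1) * q * r * N \<le> 2 * q\<^sup>2 * (\<epsilon>\<^sup>2 * m)"
  proof -
    have "(2 * z + 1) * (r * N) \<le> 2 * q * (\<epsilon>\<^sup>2 * m)"
      using mult_mono[OF \<open>2 * z + 1 \<le> 2 * q\<close> \<open>r * N \<le> \<epsilon>\<^sup>2 * m\<close>] assms(1,5,7) by simp
    then have "q * ((2 * z + 1) * (r * N)) \<le> q * (2 * q * (\<epsilon>\<^sup>2 * m))"
      using \<open>0 < q\<close> by (intro mult_left_mono) auto
    then show ?thesis
      by (simp add: power2_eq_square algebra_simps)
  qed
  moreover have "2 * z * l * (n / r) \<le> 2 * q\<^sup>2 * (\<epsilon>\<^sup>2 * m)"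
  proof -
    have "2 * z * l * (n / r) = 2 * z * (\<epsilon>\<^sup>2 * n)"
      using \<open>0 < r\<close> \<open>l = \<epsilon>\<^sup>2 * r\<close> by simp
    also have "\<dots> \<le> 2 * q * (\<epsilon>\<^sup>2 * (q * m))"
      using assms(2,3,4,6,8) by (intro mult_mono mult_left_mono) auto
    finally show ?thesis
      by (simp add: power2_eq_square algebra_simps)
  qed
  ultimately show ?thesis
    by linarith
qed

text \<open>With \<open>\<rho> = \<epsilon> / (8 q\<^sup>2)\<close> the matching bound leaves \<open>\<epsilon> / q \<le> 5 q\<^sup>2 \<epsilon>\<^sup>2 + q \<rho> + q W / \<rho>\<close>, and
  for small \<open>\<epsilon>\<close> only the last term can pay for the advantage.\<close>

lemma refinement_gain_arith:
  fixes q z n m T r L N l W \<epsilon> :: real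
  defines "D \<equiv> 2 * z + 1" and "\<rho> \<equiv> \<epsilon> / (8 * q\<^sup>2)"
  assumes "2 \<le> q" "1 \<le> z" "z + 1 \<le> q" "0 < \<epsilon>" "\<epsilon> < 1 / (18 * q ^ 3)"
    and "0 < m" "0 < r" "0 \<le> n" "0 \<le> N" "0 \<le> W" "T \<le> m"
    and adv: "\<epsilon> / q * m \<le> D * T - m - (z + z\<^sup>2) / q * n"
    and "r \<le> \<epsilon>\<^sup>2 * L" "L \<le> m" "N * L = m" "l = \<epsilon>\<^sup>2 * r"
    and core: "D * T \<le> (z + z\<^sup>2) * n / q + (z + z\<^sup>2) * r + D * q * r * N + m
                     + D * (m * \<rho> / 2 + m * W / (2 * \<rho>)) + (D - 1) * l * (n / r)"
  shows "\<epsilon>\<^sup>2 / (32 * q ^ 4) \<le> W"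
proof -
  have "0 < q" "0 < \<rho>" "D \<le> 2 * q"
    using assms(3-6) by (auto simp: D_def \<rho>_def)
  have "n \<le> q * m"
    using adv assms(3-6,8,10,13) by (intro length_le_of_adv_nonneg[of q z n \<epsilon> m T]) (simp_all add: D_def)
  then have "(z + z\<^sup>2) * r + D * q * r * N + (D - 1) * l * (n / r) \<le> 5 * q\<^sup>2 * (\<epsilon>\<^sup>2 * m)"
    using matching_error_terms_le[of q z \<epsilon> r n N m L l] assms(4-6,9-11) assms(15-18) \<open>0 < q\<close>
    by (simp add: D_def)
  moreover have "D * (m * \<rho> / 2 + m * W / (2 * \<rho>)) \<le> 2 * q * (m * \<rho> / 2 + m * W / (2 * \<rho>))"
    using \<open>D \<le> 2 * q\<close> \<open>0 < m\<close> \<open>0 < \<rho>\<close> \<open>0 \<le> W\<close> by (intro mult_right_mono) auto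
  ultimately have "\<epsilon> / q * m \<le> 5 * q\<^sup>2 * (\<epsilon>\<^sup>2 * m) + 2 * q * (m * \<rho> / 2 + m * W / (2 * \<rho>))"
    using adv core times_divide_eq_left[of "z + z\<^sup>2" q n] by linarith
  also have "\<dots> = m * (5 * q\<^sup>2 * \<epsilon>\<^sup>2 + q * \<rho> + q * W / \<rho>)"
    using \<open>0 < \<rho>\<close> by (simp add: field_simps)
  finally have "m * (\<epsilon> / q) \<le> m * (5 * q\<^sup>2 * \<epsilon>\<^sup>2 + q * \<rho> + q * W / \<rho>)"
    by (simp add: mult.commute)
  then have "\<epsilon> / q \<le> 5 * q\<^sup>2 * \<epsilon>\<^sup>2 + q * \<rho> + q * W / \<rho>"
    using \<open>0 < m\<close> by (simp only: mult_le_cancel_left_pos)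
  moreover have "5 * q\<^sup>2 * \<epsilon>\<^sup>2 \<le> 5 / 18 * (\<epsilon> / q)" "q * \<rho> = 1 / 8 * (\<epsilon> / q)"
    using assms(6,7) \<open>0 < q\<close> by (simp_all add: \<rho>_def field_simps power2_eq_square power3_eq_cube)
  ultimately have "43 / 72 * (\<epsilon> / q) \<le> q * W / \<rho>"
    by linarith
  then have "43 * \<epsilon>\<^sup>2 \<le> 576 * (W * q ^ 4)"
    using \<open>0 < q\<close> \<open>0 < \<epsilon>\<close> by (simp add: \<rho>_def field_simps power2_eq_square power3_eq_cube power4_eq_xxxx)
  moreover have "0 \<le> W * q ^ 4"
    using \<open>0 \<le> W\<close> by simp
  ultimately show ?thesis
    using \<open>0 < q\<close> by (simp add: field_simps)
qed

lemma fvar_refinement_gain: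
  fixes \<epsilon> :: real
  assumes q: "2 \<le> q" and \<epsilon>: "0 < \<epsilon>" "\<epsilon> < 1 / (18 * real q ^ 3)" and z: "1 \<le> z" "z < q"
    and walk: "l 1 dvd length v" "\<And>j. 1 \<le> j \<Longrightarrow> j < k \<Longrightarrow> l (Suc j) dvd l j"
      "\<And>j. 1 \<le> j \<Longrightarrow> j \<le> k \<Longrightarrow> 0 < l j"
    and i: "1 \<le> i" "i < k"
    and r: "0 < r (Suc i)" "real (r (Suc i)) / \<epsilon> ^ 4 \<le> real (r i)"
    and l: "real (l i) = \<epsilon>\<^sup>2 * real (r i)" "real (l (Suc i)) = \<epsilon>\<^sup>2 * real (r (Suc i))"
    and adv: "\<epsilon> / real q \<le> adv q z v (A_pref q (r (Suc i)) n)"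
  shows "fvar q l v i + \<epsilon>\<^sup>2 / (32 * real q ^ 4) \<le> fvar q l v (Suc i)"
proof -
  define m r' L l' where "m = length v" and "r' = r (Suc i)" and "L = l i" and "l' = l (Suc i)"
  have "0 < \<epsilon> / q"
    using \<epsilon> q by simp
  then obtain M where M: "is_matching v (A_pref q r' n) M" and "0 < m"
    and adv_bound: "\<epsilon> / q * m \<le> (2 * real z + 1) * length (fst M) - m - (real z + real z ^ 2) / q * n"
    using adv_witness[of "\<epsilon> / q" q z v "A_pref q r' n"] adv by (auto simp: m_def r'_def A_pref_def)
  have "L dvd m" "l' dvd L" "0 < l'" "0 < L"
    using walk_eq_uniform_block[of l v k i, OF walk \<open>0 < m\<close>[unfolded m_def]] i walk(2,3)
    by (auto simp: m_def L_def l'_def)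
  define K N where "K = L div l'" and "N = m div L"
  have LK: "L = K * l'" and mNL: "m = N * L" and "0 < N" "0 < K"
    using \<open>L dvd m\<close> \<open>l' dvd L\<close> \<open>0 < m\<close> \<open>0 < L\<close> by (auto simp: K_def N_def intro!: Nat.gr0I)
  define W where "W = refinement_sqdev q v K l' / real (N * K)"
  have "length v div l' = N * K"
    using mNL LK \<open>0 < l'\<close> by (simp add: m_def)
  then have gain: "fvar q l v (Suc i) = fvar q l v i + W"
    using fvar_Suc_eq[of l v k i q, OF walk \<open>0 < m\<close>[unfolded m_def] i]
    by (simp add: W_def K_def L_def l'_def)
  define \<rho> where "\<rho> = \<epsilon> / (8 * real q ^ 2)"
  have "0 < \<rho>"
    using \<epsilon> q by (simp add: \<rho>_def)
  have core: "(2 * real z + 1) * length (fst M)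
      \<le> (real z + real z ^ 2) * n / q + (real z + real z ^ 2) * r' + (2 * real z + 1) * q * r' * N + m
         + (2 * real z + 1) * (m * \<rho> / 2 + m * W / (2 * \<rho>)) + (2 * real z + 1 - 1) * l' * (n / r')"
  proof -
    have "l' * refinement_sqdev q v K l' = m * W"
      using mNL LK \<open>0 < N\<close> \<open>0 < K\<close> by (simp add: W_def)
    then show ?thesis
      using matching_size_bound[OF M, of N K l' \<rho> z] mNL LK \<open>0 < N\<close> \<open>0 < K\<close> \<open>0 < l'\<close> \<open>0 < \<rho>\<close> r q
      by (simp add: m_def r'_def)
  qed
  have "\<epsilon>\<^sup>2 / (32 * real q ^ 4) \<le> W"
  proof (rule refinement_gain_arith[OF _ _ _ \<epsilon> _ _ _ _ _ _ adv_bound _ _ _ _ core[unfolded \<rho>_def]])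
    show "real r' \<le> \<epsilon>\<^sup>2 * real L"
      using r(2) l(1) \<epsilon> by (simp add: r'_def L_def divide_le_eq power4_eq_xxxx power2_eq_square algebra_simps)
    show "real (length (fst M)) \<le> real m"
      using is_matching_length_le[OF M] by (simp add: m_def)
    show "real L \<le> real m"
      using \<open>L dvd m\<close> \<open>0 < m\<close> by (simp add: dvd_imp_le)
  qed (use q z \<open>0 < m\<close> r mNL l in \<open>simp_all add: W_def refinement_sqdev_nonneg r'_def l'_def\<close>)
  then show ?thesis
    using gain by simp
qed

theorem lemma5p6:
  shows "\<exists>c::real. c > 0 \<and>
    (\<forall>q::nat. q \<ge> 2 \<longrightarrow> (\<exists>\<epsilon>0::real. \<epsilon>0 > 0 \<and>
      (\<forall>(\<epsilon>::real) (z::nat) (n::nat) (v::nat list) (k::nat) (r::nat \<Rightarrow> nat) (l::nat \<Rightarrow> nat).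
         0 < \<epsilon> \<and> \<epsilon> < \<epsilon>0 \<and> 1 \<le> z \<and> z \<le> q - 1 \<and> 0 < n \<and> set v \<subseteq> {1..q} \<and>
         (\<forall>j\<in>{1..k}. 0 < r j) \<and>
         (\<forall>j. 1 \<le> j \<and> j < k \<longrightarrow> r j > r (Suc j) \<and> real (r j) \<ge> real (r (Suc j)) / \<epsilon> ^ 4) \<and>
         (\<forall>j\<in>{1..k}. real (l j) = \<epsilon>\<^sup>2 * real (r j)) \<and>
         l 1 dvd length v \<and>
         (\<forall>j. 1 \<le> j \<and> j < k \<longrightarrow> l (Suc j) dvd l j) \<and>
         (\<forall>j\<in>{1..k}. adv q z v (A_pref q (r j) n) \<ge> \<epsilon> / real q)
       \<longrightarrow> (\<forall>i. 1 \<le> i \<and> i < k \<longrightarrow>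
              fvar q l v (Suc i) \<ge> fvar q l v i + c * \<epsilon>\<^sup>2 / real q ^ 4))))"
  apply (rule exI[of _ "1 / 32"], intro conjI allI impI)
   apply simp
  subgoal for q
    apply (rule exI[of _ "1 / (18 * real q ^ 3)"], intro conjI allI impI)
     apply simp
    subgoal premises prems for \<epsilon> z n v k r l i
    proof -
      have "0 < l j" if "1 \<le> j" "j \<le> k" for j
        using prems that by (metis atLeastAtMost_iff of_nat_0_less_iff mult_pos_pos zero_less_power)
      then show ?thesis
        using fvar_refinement_gain[of q \<epsilon> z l v k i r n] prems by auto
    qed
    done
  done

end
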